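(* Let $R\subseteq\{0,1\}^V$ be a relation that is not closed under joins (there exist $x,y\in R$ with $x\vee y\notin R$), but such that every pinning $R_p$ with $\mathrm{dom}(p)\ne\emptyset$ is closed under joins. Then there is a configuration $x$ with $R=\{\mathbf 0,x,\overline x\}$ or $R=\{x,\overline x\}$.
   Context: $x\vee y$ is the coordinatewise maximum. A partial configuration $p$ of $V$ is an element of $\{0,1\}^{\mathrm{dom}(p)}$ with $\mathrm{dom}(p)\subseteq V$; the pinning $R_p\subseteq\{0,1\}^{V\setminus\mathrm{dom}(p)}$ is $\{x:(x,p)\in R\}$. $\mathbf 0$ is the all-zero configuration and $\overline x_i=1-x_i$. *)

theory Defs
  imports Main
begin

text \<open>A configuration x in {0,1}^V is encoded by the set of coordinates where x is 1
  (a subset of V). Join = union, all-zero = {}, complement = V - x.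
  A partial configuration p is encoded by its domain D (a subset of V) and the set P
  (a subset of D) of coordinates where p is 1.\<close>

definition join_closed :: "'v set set \<Rightarrow> bool" where
  "join_closed R \<longleftrightarrow> (\<forall>x\<in>R. \<forall>y\<in>R. x \<union> y \<in> R)"

definition pinning :: "'v set \<Rightarrow> 'v set set \<Rightarrow> 'v set \<Rightarrow> 'v set \<Rightarrow> 'v set set" where
  "pinning V R D P = {x. x \<subseteq> V - D \<and> x \<union> P \<in> R}"

end

theory Submission
  imports Defs
begin

(* Pinning a single coordinate v to the value that two members z, w of R share
   there, the hypothesis says the pinned relation is join-closed; hence z \<union> w \<in> R whenever
   z and w agree at some coordinate of V.  Everything else follows from agreeing_joins alone:
   (1) a failing join x \<union> y \<notin> R forces x and y to disagree everywhere, i.e. y = V - x, and then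
       V = x \<union> y \<notin> R;
   (2) any further member z \<notin> {{}, x, V - x} agrees somewhere with x and somewhere with V - x,
       so z \<union> x and z \<union> (V - x) lie in R; both contain z \<noteq> {}, so their join V lies in R,
       contradicting (1).
   Thus R \<subseteq> {{}, x, V - x} with x, V - x \<in> R, which is the theorem. *)

definition agreeing_joins :: "'v set \<Rightarrow> 'v set set \<Rightarrow> bool" where
  "agreeing_joins V R \<longleftrightarrow>
     (\<forall>z\<in>R. \<forall>w\<in>R. (\<exists>v\<in>V. (v \<in> z) = (v \<in> w)) \<longrightarrow> z \<union> w \<in> R)"

lemma agreeing_joinsD:
  assumes "agreeing_joins V R" "z \<in> R" "w \<in> R" "\<exists>v\<in>V. (v \<in> z) = (v \<in> w)"
  shows "z \<union> w \<in> R"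
  using assms unfolding agreeing_joins_def by blast

lemma restrict_in_pinning:
  assumes "z \<in> R" "z \<subseteq> V"
  shows "z - D \<in> pinning V R D (z \<inter> D)"
proof -
  have "(z - D) \<union> (z \<inter> D) = z" by blast
  then show ?thesis using assms unfolding pinning_def by auto
qed

lemma join_in_if_pinning_closed:
  assumes closed: "join_closed (pinning V R D (z \<inter> D))"
    and z: "z \<in> R" "z \<subseteq> V" and w: "w \<in> R" "w \<subseteq> V"
    and agree: "z \<inter> D = w \<inter> D"
  shows "z \<union> w \<in> R"
proof -
  have "z - D \<in> pinning V R D (z \<inter> D)" using restrict_in_pinning[OF z] .
  moreover have "w - D \<in> pinning V R D (z \<inter> D)"
    using restrict_in_pinning[OF w] agree by simp
  ultimately have "(z - D) \<union> (w - D) \<in> pinning V R D (z \<inter> D)"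
    using closed unfolding join_closed_def by blast
  moreover have "(z - D) \<union> (w - D) \<union> (z \<inter> D) = z \<union> w" using agree by blast
  ultimately show ?thesis unfolding pinning_def by simp
qed

lemma agreeing_joins_from_pinnings:
  assumes R: "R \<subseteq> Pow V"
    and pinned: "\<And>v P. v \<in> V \<Longrightarrow> P \<subseteq> {v} \<Longrightarrow> join_closed (pinning V R {v} P)"
  shows "agreeing_joins V R"
  unfolding agreeing_joins_def
proof (intro ballI impI)
  fix z w assume z: "z \<in> R" and w: "w \<in> R" and "\<exists>v\<in>V. (v \<in> z) = (v \<in> w)"
  then obtain v where v: "v \<in> V" and agree: "(v \<in> z) = (v \<in> w)" by blast
  have zV: "z \<subseteq> V" and wV: "w \<subseteq> V" using z w R by auto
  have same: "z \<inter> {v} = w \<inter> {v}" using agree by blast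
  have "join_closed (pinning V R {v} (z \<inter> {v}))" using pinned[OF v, of "z \<inter> {v}"] by simp
  then show "z \<union> w \<in> R" using join_in_if_pinning_closed[OF _ z zV w wV same] by simp
qed

lemma failing_join_complementary:
  assumes joins: "agreeing_joins V R" and R: "R \<subseteq> Pow V"
    and x: "x \<in> R" and y: "y \<in> R" and fail: "x \<union> y \<notin> R"
  shows "y = V - x"
proof -
  have disagree: "(v \<in> x) \<noteq> (v \<in> y)" if v: "v \<in> V" for v
  proof
    assume "(v \<in> x) = (v \<in> y)"
    then have "x \<union> y \<in> R" using agreeing_joinsD[OF joins x y] v by blast
    then show False using fail by simp
  qed
  have "x \<subseteq> V" "y \<subseteq> V" using x y R by auto
  then show ?thesis using disagree by auto
qed

lemma agrees_with_complement:
  assumes "z \<subseteq> V" "x \<subseteq> V" "z \<noteq> x"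
  shows "\<exists>v\<in>V. (v \<in> z) = (v \<in> V - x)"
proof -
  obtain v where differ: "(v \<in> z) \<noteq> (v \<in> x)" using assms(3) by blast
  then have "v \<in> V" using assms(1,2) by auto
  then show ?thesis using differ by auto
qed

lemma members_classified:
  assumes joins: "agreeing_joins V R" and "R \<subseteq> Pow V"
    and x: "x \<in> R" and x': "V - x \<in> R" and full: "V \<notin> R"
  shows "R \<subseteq> {{}, x, V - x}"
proof
  fix z assume z: "z \<in> R"
  show "z \<in> {{}, x, V - x}"
  proof (rule ccontr)
    assume other: "z \<notin> {{}, x, V - x}"
    have zV: "z \<subseteq> V" and xV: "x \<subseteq> V" using z x assms(2) by auto
    have "V - (V - x) = x" using xV by auto
    then have "\<exists>v\<in>V. (v \<in> z) = (v \<in> x)"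
      using agrees_with_complement[of z V "V - x"] other zV by auto
    then have zx: "z \<union> x \<in> R" using agreeing_joinsD[OF joins z x] by simp
    have "\<exists>v\<in>V. (v \<in> z) = (v \<in> V - x)"
      using agrees_with_complement[of z V x] other zV xV by auto
    then have zx': "z \<union> (V - x) \<in> R" using agreeing_joinsD[OF joins z x'] by simp
    obtain u where "u \<in> z" using other by blast
    then have "\<exists>v\<in>V. (v \<in> z \<union> x) = (v \<in> z \<union> (V - x))" using zV by auto
    then have "(z \<union> x) \<union> (z \<union> (V - x)) \<in> R" using agreeing_joinsD[OF joins zx zx'] by simp
    moreover have "(z \<union> x) \<union> (z \<union> (V - x)) = V" using zV xV by blast
    ultimately show False using full by simp
  qed
qed

theorem mainTheorem9:
  fixes V :: "'v set" and R :: "'v set set"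
  assumes "finite V"
    and "R \<subseteq> Pow V"
    and "\<not> join_closed R"
    and "\<And>D P. D \<subseteq> V \<Longrightarrow> D \<noteq> {} \<Longrightarrow> P \<subseteq> D \<Longrightarrow> join_closed (pinning V R D P)"
  shows "\<exists>x. x \<subseteq> V \<and> (R = {{}, x, V - x} \<or> R = {x, V - x})"
proof -
  have joins: "agreeing_joins V R"
    using agreeing_joins_from_pinnings[OF assms(2)] assms(4) by blast
  obtain x y where x: "x \<in> R" and y: "y \<in> R" and fail: "x \<union> y \<notin> R"
    using assms(3) unfolding join_closed_def by blast
  have xV: "x \<subseteq> V" using x assms(2) by auto
  have y_compl: "y = V - x" using failing_join_complementary[OF joins assms(2) x y fail] .
  have "x \<union> y = V" using xV y_compl by blast
  then have "V \<notin> R" using fail by simp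
  then have "R \<subseteq> {{}, x, V - x}"
    using members_classified[OF joins assms(2) x] y y_compl by blast
  then have "R = {{}, x, V - x} \<or> R = {x, V - x}" using x y y_compl by blast
  then show ?thesis using xV by blast
qed

end
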